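(* Let $K$ be an idempotent ordered TGP-$\omega$-valuation monoid, $AP$ a finite set of atomic propositions, $k\in K\setminus\{\mathbf{0},\mathbf{1}\}$ and $\varphi\in k\text{-}stLTL(K,AP)$. Then $\|\varphi\|$ is $k$-safe.
   Context: Idempotent ordered TGP-$\omega$-valuation monoid $(K,+,\cdot,Val^{\omega},\mathbf{0},\mathbf{1})$: complete (infinitary sums over arbitrary index sets with the usual axioms), idempotent monoid $(K,+,\mathbf{0})$, totally ordered by the natural order $k\le k'$ iff $k'=k'+k$, with $Val^{\omega}$ from finitely-valued sequences in $K$ to $K$ and a product $\cdot$ with zero $\mathbf{0}$ and unit $\mathbf{1}$, such that $Val^{\omega}=\mathbf{0}$ if some entry is $\mathbf{0}$, $Val^{\omega}(\mathbf{1}^{\omega})=\mathbf{1}$, $\sum_I(k\cdot\mathbf{1})=k\cdot\sum_I\mathbf{1}$, $Val^{\omega}$ distributes over finite sums of families lying entirely in $L\setminus\{\mathbf{0},\mathbf{1}\}$ or entirely in $\{\mathbf{0},\mathbf{1}\}$ ($L\subseteq K$ finite), and $Val^{\omega}(\mathbf{1},k_1,\dots)=Val^{\omega}(k_1,\dots)$, $Val^{\omega}(k,\mathbf{1},\dots)=k$, $k\le\mathbf{1}$, $k_i\ge k\ \forall i\Rightarrow Val^{\omega}((k_i)_i)\ge k$. Weighted LTL over $AP$ and $K$: $\varphi::=k\mid a\mid\neg a\mid\varphi\vee\varphi\mid\varphi\wedge\varphi\mid\bigcirc\varphi\mid\varphi U\varphi\mid\square\varphi$, with semantics $\|\varphi\|:(\mathcal{P}(AP))^{\omega}\to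 K$: $(\|k\|,w)=k$; $(\|a\|,w)=\mathbf{1}$ if $a\in w(0)$ else $\mathbf{0}$; $\neg a$ dually; $\vee\mapsto+$, $\wedge\mapsto\cdot$ pointwise; $(\|\bigcirc\varphi\|,w)=(\|\varphi\|,w_{\ge1})$; $(\|\varphi U\psi\|,w)=\sum_{i\ge0}Val^{\omega}((\|\varphi\|,w_{\ge0}),\dots,(\|\varphi\|,w_{\ge i-1}),(\|\psi\|,w_{\ge i}),\mathbf{1},\mathbf{1},\dots)$; $(\|\square\varphi\|,w)=Val^{\omega}(((\|\varphi\|,w_{\ge i}))_{i\ge0})$. $true:=\mathbf{1}$, $\varphi\tilde U\psi:=\square\varphi\vee(\varphi U\psi)$. $sbLTL(K,AP)$: $\varphi::=true\mid a\mid\neg a\mid\varphi\vee\varphi\mid\varphi\wedge\varphi\mid\bigcirc\varphi\mid\varphi\tilde U\varphi\mid\square\varphi$. $L_k=\{k'\in K\mid k'\ge k\}$. $k\text{-}stLTL(K,AP)$ consists of formulas $\bigvee_{1\le i\le n}(k_i\wedge\varphi_i)$ with $k_i\in L_k\setminus\{\mathbf{0},\mathbf{1}\}$, $\varphi_i\in sbLTL(K,AP)$. For $k\in K\setminus\{\mathbf{0},\mathbf{1}\}$, a series $s:(\mathcal{P}(AP))^{\omega}\to K$ is $k$-safe if for every $w$: whenever for every $i>0$ there is $u$ with $(s,w_{<i}u)\ge k$ ($w_{<i}$ the length-$i$ prefix), then $(s,w)\ge k$. *)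

theory Defs
  imports Main
begin

text \<open>Index sets of infinitary sums are subsets of the type idx = nat => nat
  (cardinality continuum); this covers all sums used in the paper (sums over
  nat, and sums over products of countably many finite index sets).\<close>

type_synonym idx = "nat \<Rightarrow> nat"

definition nle :: "('k \<Rightarrow> 'k \<Rightarrow> 'k) \<Rightarrow> 'k \<Rightarrow> 'k \<Rightarrow> bool" where
  "nle add k k' \<longleftrightarrow> k' = add k' k"

definition nsum :: "(idx set \<Rightarrow> (idx \<Rightarrow> 'k) \<Rightarrow> 'k) \<Rightarrow> nat set \<Rightarrow> (nat \<Rightarrow> 'k) \<Rightarrow> 'k" where
  "nsum SumK A F = SumK ((\<lambda>i (_::nat). i) ` A) (\<lambda>g. F (g 0))"

definition fin_valued :: "(nat \<Rightarrow> 'k) \<Rightarrow> bool" where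
  "fin_valued f \<longleftrightarrow> finite (range f)"

locale idem_ord_TGP_omega_vm =
  fixes add :: "'k \<Rightarrow> 'k \<Rightarrow> 'k"
    and zero :: 'k
    and one :: 'k
    and mult :: "'k \<Rightarrow> 'k \<Rightarrow> 'k"
    and Val :: "(nat \<Rightarrow> 'k) \<Rightarrow> 'k"
    and SumK :: "idx set \<Rightarrow> (idx \<Rightarrow> 'k) \<Rightarrow> 'k"
  assumes add_assoc: "add (add a b) c = add a (add b c)"
    and add_zero_left: "add zero a = a"
    and add_zero_right: "add a zero = a"
    and add_idem: "add a a = a"
    and Sum_cong: "(\<And>i. i \<in> I \<Longrightarrow> f i = g i) \<Longrightarrow> SumK I f = SumK I g"
    and Sum_empty: "SumK {} f = zero"
    and Sum_single: "SumK {j} f = f j"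
    and Sum_pair: "j \<noteq> l \<Longrightarrow> SumK {j, l} f = add (f j) (f l)"
    and Sum_partition:
      "I = (\<Union>j\<in>J. P j) \<Longrightarrow> (\<And>j j'. j \<in> J \<Longrightarrow> j' \<in> J \<Longrightarrow> j \<noteq> j' \<Longrightarrow> P j \<inter> P j' = {})
        \<Longrightarrow> SumK I f = SumK J (\<lambda>j. SumK (P j) f)"
    and total: "nle add a b \<or> nle add b a"
    and mult_zero_left: "mult zero a = zero"
    and mult_zero_right: "mult a zero = zero"
    and mult_one_left: "mult one a = a"
    and mult_one_right: "mult a one = a"
    and Val_zero: "fin_valued v \<Longrightarrow> v i = zero \<Longrightarrow> Val v = zero"
    and Val_one: "Val (\<lambda>_. one) = one"
    and Sum_mult_one: "SumK I' (\<lambda>_. mult a one) = mult a (SumK I' (\<lambda>_. one))"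
    and Val_distrib:
      "finite L \<Longrightarrow> (\<And>n. finite (JJ n)) \<Longrightarrow>
       (\<forall>n. \<forall>m\<in>JJ n. ff n m \<in> L - {zero, one}) \<or> (\<forall>n. \<forall>m\<in>JJ n. ff n m \<in> {zero, one}) \<Longrightarrow>
       Val (\<lambda>n. nsum SumK (JJ n) (ff n)) = SumK {gg. \<forall>n. gg n \<in> JJ n} (\<lambda>gg. Val (\<lambda>n. ff n (gg n)))"
    and Val_one_head: "fin_valued v \<Longrightarrow> Val (\<lambda>n. if n = 0 then one else v (n - 1)) = Val v"
    and Val_head_ones: "Val (\<lambda>n. if n = 0 then a else one) = a"
    and le_one: "nle add a one"
    and Val_lower: "fin_valued v \<Longrightarrow> (\<And>i. nle add a (v i)) \<Longrightarrow> nle add a (Val v)"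

datatype ('k, 'a) wltl =
    Const 'k
  | Prop 'a
  | NProp 'a
  | Or "('k, 'a) wltl" "('k, 'a) wltl"
  | And "('k, 'a) wltl" "('k, 'a) wltl"
  | Next "('k, 'a) wltl"
  | Until "('k, 'a) wltl" "('k, 'a) wltl"
  | Box "('k, 'a) wltl"

definition suffix :: "nat \<Rightarrow> (nat \<Rightarrow> 'a) \<Rightarrow> (nat \<Rightarrow> 'a)" where
  "suffix n w = (\<lambda>i. w (n + i))"

primrec sem :: "('k \<Rightarrow> 'k \<Rightarrow> 'k) \<Rightarrow> 'k \<Rightarrow> 'k \<Rightarrow> ('k \<Rightarrow> 'k \<Rightarrow> 'k) \<Rightarrow> ((nat \<Rightarrow> 'k) \<Rightarrow> 'k)
    \<Rightarrow> (idx set \<Rightarrow> (idx \<Rightarrow> 'k) \<Rightarrow> 'k) \<Rightarrow> ('k, 'a) wltl \<Rightarrow> (nat \<Rightarrow> 'a set) \<Rightarrow> 'k" where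
  "sem add zero one mult Val SumK (Const k) w = k"
| "sem add zero one mult Val SumK (Prop a) w = (if a \<in> w 0 then one else zero)"
| "sem add zero one mult Val SumK (NProp a) w = (if a \<in> w 0 then zero else one)"
| "sem add zero one mult Val SumK (Or \<phi> \<psi>) w =
     add (sem add zero one mult Val SumK \<phi> w) (sem add zero one mult Val SumK \<psi> w)"
| "sem add zero one mult Val SumK (And \<phi> \<psi>) w =
     mult (sem add zero one mult Val SumK \<phi> w) (sem add zero one mult Val SumK \<psi> w)"
| "sem add zero one mult Val SumK (Next \<phi>) w = sem add zero one mult Val SumK \<phi> (suffix 1 w)"
| "sem add zero one mult Val SumK (Until \<phi> \<psi>) w =
     nsum SumK UNIV (\<lambda>i. Val (\<lambda>j. if j < i then sem add zero one mult Val SumK \<phi> (suffix j w)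
                                else if j = i then sem add zero one mult Val SumK \<psi> (suffix i w)
                                else one))"
| "sem add zero one mult Val SumK (Box \<phi>) w = Val (\<lambda>i. sem add zero one mult Val SumK \<phi> (suffix i w))"

definition WUntil :: "('k, 'a) wltl \<Rightarrow> ('k, 'a) wltl \<Rightarrow> ('k, 'a) wltl" where
  "WUntil \<phi> \<psi> = Or (Box \<phi>) (Until \<phi> \<psi>)"

inductive sbLTL :: "'k \<Rightarrow> ('k, 'a) wltl \<Rightarrow> bool" for one :: 'k where
  sb_true: "sbLTL one (Const one)"
| sb_prop: "sbLTL one (Prop a)"
| sb_nprop: "sbLTL one (NProp a)"
| sb_or: "sbLTL one \<phi> \<Longrightarrow> sbLTL one \<psi> \<Longrightarrow> sbLTL one (Or \<phi> \<psi>)"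
| sb_and: "sbLTL one \<phi> \<Longrightarrow> sbLTL one \<psi> \<Longrightarrow> sbLTL one (And \<phi> \<psi>)"
| sb_next: "sbLTL one \<phi> \<Longrightarrow> sbLTL one (Next \<phi>)"
| sb_wuntil: "sbLTL one \<phi> \<Longrightarrow> sbLTL one \<psi> \<Longrightarrow> sbLTL one (WUntil \<phi> \<psi>)"
| sb_box: "sbLTL one \<phi> \<Longrightarrow> sbLTL one (Box \<phi>)"

fun bigOr :: "('k, 'a) wltl list \<Rightarrow> ('k, 'a) wltl" where
  "bigOr [] = undefined"
| "bigOr [\<phi>] = \<phi>"
| "bigOr (\<phi> # \<psi> # \<psi>s) = Or \<phi> (bigOr (\<psi> # \<psi>s))"

definition Lk :: "('k \<Rightarrow> 'k \<Rightarrow> 'k) \<Rightarrow> 'k \<Rightarrow> 'k set" where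
  "Lk add k = {k'. nle add k k'}"

definition k_stLTL :: "('k \<Rightarrow> 'k \<Rightarrow> 'k) \<Rightarrow> 'k \<Rightarrow> 'k \<Rightarrow> 'k \<Rightarrow> ('k, 'a) wltl \<Rightarrow> bool" where
  "k_stLTL add zero one k \<phi> \<longleftrightarrow>
     (\<exists>ps :: ('k \<times> ('k, 'a) wltl) list. ps \<noteq> [] \<and>
        (\<forall>(ki, \<phi>i) \<in> set ps. ki \<in> Lk add k - {zero, one} \<and> sbLTL one \<phi>i) \<and>
        \<phi> = bigOr (map (\<lambda>(ki, \<phi>i). And (Const ki) \<phi>i) ps))"

definition prefix_conc :: "nat \<Rightarrow> (nat \<Rightarrow> 'a) \<Rightarrow> (nat \<Rightarrow> 'a) \<Rightarrow> (nat \<Rightarrow> 'a)" where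
  "prefix_conc i w u = (\<lambda>j. if j < i then w j else u (j - i))"

definition k_safe :: "('k \<Rightarrow> 'k \<Rightarrow> 'k) \<Rightarrow> 'k \<Rightarrow> ((nat \<Rightarrow> 'a set) \<Rightarrow> 'k) \<Rightarrow> bool" where
  "k_safe add k s \<longleftrightarrow>
     (\<forall>w. (\<forall>i>0. \<exists>u. nle add k (s (prefix_conc i w u))) \<longrightarrow> nle add k (s w))"

end

theory Submission
  imports Defs
begin

text \<open>Every sbLTL formula only takes the values 0 and 1, and its support is a safety language
  (a closed set in the prefix topology on infinite words). For a k-stLTL formula the weights k_i
  are all at least k, so, the order being total, the value is at least k exactly on the finite
  union of the supports of its sbLTL parts; k-safety is the statement that this union is a safety
  language. Safety languages are closed under suffix preimages, arbitrary intersections and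
  finite unions (a bad prefix for each of two languages gives a common one, the longer of the
  two), and weak until is an intersection over n of finite unions of such sets: either the left
  formula holds up to n, or the right one is reached by n.\<close>

definition safety :: "(nat \<Rightarrow> 'a) set \<Rightarrow> bool" where
  "safety P \<longleftrightarrow> (\<forall>w. (\<forall>i>0. \<exists>u. prefix_conc i w u \<in> P) \<longrightarrow> w \<in> P)"

lemma k_safe_iff_safety: "k_safe add k s \<longleftrightarrow> safety {w. nle add k (s w)}"
  by (simp add: k_safe_def safety_def)

lemma suffix_prefix_conc:
  "i \<le> n \<Longrightarrow> suffix i (prefix_conc n w u) = prefix_conc (n - i) (suffix i w) u"
  by (auto simp: suffix_def prefix_conc_def fun_eq_iff add.commute)

lemma prefix_conc_prefix_conc:
  "i \<le> n \<Longrightarrow> prefix_conc i w (suffix i (prefix_conc n w u)) = prefix_conc n w u"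
  by (auto simp: suffix_def prefix_conc_def fun_eq_iff)

lemma safety_UNIV: "safety UNIV"
  by (simp add: safety_def)

lemma safety_first_letter: "safety {w. R (w 0)}"
  unfolding safety_def by (metis mem_Collect_eq prefix_conc_def zero_less_one)

lemma safety_INT:
  assumes "\<And>x. x \<in> X \<Longrightarrow> safety (P x)"
  shows "safety (\<Inter>x\<in>X. P x)"
  unfolding safety_def
proof (intro allI impI INT_I)
  fix w x
  assume "\<forall>i>0. \<exists>u. prefix_conc i w u \<in> (\<Inter>x\<in>X. P x)" and x: "x \<in> X"
  then have "\<forall>i>0. \<exists>u. prefix_conc i w u \<in> P x"
    by blast
  then show "w \<in> P x"
    using assms[OF x] unfolding safety_def by blast
qed

lemma safety_Int: "safety P \<Longrightarrow> safety Q \<Longrightarrow> safety (P \<inter> Q)"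
  unfolding safety_def by blast

lemma safety_Un:
  assumes P: "safety P" and Q: "safety Q"
  shows "safety (P \<union> Q)"
  unfolding safety_def
proof (intro allI impI)
  fix w
  assume ext: "\<forall>i>0. \<exists>u. prefix_conc i w u \<in> P \<union> Q"
  show "w \<in> P \<union> Q"
  proof (rule ccontr)
    assume "w \<notin> P \<union> Q"
    then have "w \<notin> P" "w \<notin> Q"
      by simp_all
    then obtain i j where "i > 0" "j > 0"
      and bad_P: "\<And>u. prefix_conc i w u \<notin> P" and bad_Q: "\<And>u. prefix_conc j w u \<notin> Q"
      using P Q unfolding safety_def by metis
    then obtain u where u: "prefix_conc (max i j) w u \<in> P \<union> Q"
      using ext by (meson max.strict_coboundedI1)
    have "prefix_conc i w (suffix i (prefix_conc (max i j) w u)) = prefix_conc (max i j) w u"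
      and "prefix_conc j w (suffix j (prefix_conc (max i j) w u)) = prefix_conc (max i j) w u"
      by (simp_all add: prefix_conc_prefix_conc)
    then show False
      using u bad_P bad_Q by (metis Un_iff)
  qed
qed

lemma safety_UN:
  "finite X \<Longrightarrow> (\<And>x. x \<in> X \<Longrightarrow> safety (P x)) \<Longrightarrow> safety (\<Union>x\<in>X. P x)"
proof (induction X rule: finite_induct)
  case empty
  show ?case
    unfolding safety_def using zero_less_one by blast
next
  case (insert x X)
  then show ?case by (simp add: safety_Un)
qed

lemma safety_vimage_suffix:
  assumes "safety P"
  shows "safety {w. suffix n w \<in> P}"
  unfolding safety_def
proof (intro allI impI)
  fix w
  assume ext: "\<forall>i>0. \<exists>u. prefix_conc i w u \<in> {w. suffix n w \<in> P}"
  have "\<exists>u. prefix_conc i (suffix n w) u \<in> P" if "i > 0" for i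
    using ext suffix_prefix_conc[of n "n + i" w] that
    by (metis add_diff_cancel_left' le_add1 mem_Collect_eq trans_less_add2)
  then show "w \<in> {w. suffix n w \<in> P}"
    using assms unfolding safety_def by blast
qed

lemma weak_until_iff_bounded:
  fixes P Q :: "nat \<Rightarrow> bool"
  shows "(\<forall>i. P i) \<or> (\<exists>i. Q i \<and> (\<forall>j<i. P j))
      \<longleftrightarrow> (\<forall>n. (\<exists>i\<le>n. Q i \<and> (\<forall>j<i. P j)) \<or> (\<forall>j\<le>n. P j))"
proof (intro iffI allI)
  fix n
  assume "(\<forall>i. P i) \<or> (\<exists>i. Q i \<and> (\<forall>j<i. P j))"
  then show "(\<exists>i\<le>n. Q i \<and> (\<forall>j<i. P j)) \<or> (\<forall>j\<le>n. P j)"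
  proof (elim disjE exE conjE)
    fix i
    assume "Q i" and before: "\<forall>j<i. P j"
    show ?thesis
    proof (cases "i \<le> n")
      case False
      then show ?thesis
        using before by auto
    qed (use \<open>Q i\<close> before in blast)
  qed simp
next
  assume bounded: "\<forall>n. (\<exists>i\<le>n. Q i \<and> (\<forall>j<i. P j)) \<or> (\<forall>j\<le>n. P j)"
  show "(\<forall>i. P i) \<or> (\<exists>i. Q i \<and> (\<forall>j<i. P j))"
  proof (cases "\<forall>i. P i")
    case False
    then obtain m where "\<not> P m"
      by blast
    then have "\<exists>i\<le>m. Q i \<and> (\<forall>j<i. P j)"
      using bounded by blast
    then show ?thesis
      by blast
  qed simp
qed

primrec lang :: "'k \<Rightarrow> ('k, 'a) wltl \<Rightarrow> (nat \<Rightarrow> 'a set) set" where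
  "lang one (Const c) = {w. c = one}"
| "lang one (Prop a) = {w. a \<in> w 0}"
| "lang one (NProp a) = {w. a \<notin> w 0}"
| "lang one (Or \<phi> \<psi>) = lang one \<phi> \<union> lang one \<psi>"
| "lang one (And \<phi> \<psi>) = lang one \<phi> \<inter> lang one \<psi>"
| "lang one (Next \<phi>) = {w. suffix 1 w \<in> lang one \<phi>}"
| "lang one (Until \<phi> \<psi>) =
     {w. \<exists>i. suffix i w \<in> lang one \<psi> \<and> (\<forall>j<i. suffix j w \<in> lang one \<phi>)}"
| "lang one (Box \<phi>) = {w. \<forall>i. suffix i w \<in> lang one \<phi>}"

lemma lang_WUntil:
  "lang one (WUntil \<phi> \<psi>) =
     (\<Inter>n. (\<Union>i\<in>{..n}. {w. suffix i w \<in> lang one \<psi>} \<inter> (\<Inter>j\<in>{..<i}. {w. suffix j w \<in> lang one \<phi>}))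
           \<union> (\<Inter>j\<in>{..n}. {w. suffix j w \<in> lang one \<phi>}))" (is "_ = ?bounded")
proof (rule set_eqI)
  fix w
  show "w \<in> lang one (WUntil \<phi> \<psi>) \<longleftrightarrow> w \<in> ?bounded"
    using weak_until_iff_bounded[of "\<lambda>j. suffix j w \<in> lang one \<phi>" "\<lambda>i. suffix i w \<in> lang one \<psi>"]
    by (simp add: WUntil_def) (simp add: Bex_def Ball_def)
qed

lemma lang_Box: "lang one (Box \<phi>) = (\<Inter>i. {w. suffix i w \<in> lang one \<phi>})"
  by auto

lemma safety_lang: "sbLTL one \<phi> \<Longrightarrow> safety (lang one \<phi>)"
proof (induction rule: sbLTL.induct)
  case (sb_wuntil \<phi> \<psi>)
  then show ?case
    unfolding lang_WUntil
    by (intro safety_INT safety_Un safety_UN safety_Int safety_vimage_suffix) auto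
next
  case (sb_box \<phi>)
  then show ?case
    unfolding lang_Box by (intro safety_INT safety_vimage_suffix)
qed (auto intro: safety_UNIV safety_first_letter safety_Un safety_Int safety_vimage_suffix)

lemma const_zero_neq_const_one: "(\<lambda>_::nat. 0::nat) \<noteq> (\<lambda>_. 1)"
  by (metis zero_neq_one)

context idem_ord_TGP_omega_vm
begin

abbreviation wsem :: "('k, 'a) wltl \<Rightarrow> (nat \<Rightarrow> 'a set) \<Rightarrow> 'k" where
  "wsem \<equiv> sem add zero one mult Val SumK"

lemma add_comm: "add a b = add b a"
proof -
  define f :: "idx \<Rightarrow> 'k" where "f = (\<lambda>x. if x = (\<lambda>_. 0) then a else b)"
  have "add (f (\<lambda>_. 0)) (f (\<lambda>_. 1)) = add (f (\<lambda>_. 1)) (f (\<lambda>_. 0))"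
    using Sum_pair[OF const_zero_neq_const_one, of f] Sum_pair[OF const_zero_neq_const_one[symmetric], of f]
    by (simp add: insert_commute)
  then show ?thesis
    using const_zero_neq_const_one by (simp add: f_def)
qed

lemma add_one_left: "add one a = one"
  using le_one[of a] unfolding nle_def by simp

lemma add_one_right: "add a one = one"
  using add_one_left add_comm by metis

lemma nle_trans: "nle add a b \<Longrightarrow> nle add b c \<Longrightarrow> nle add a c"
  unfolding nle_def by (metis add_assoc)

lemma nle_zero_iff: "nle add k zero \<longleftrightarrow> k = zero"
  unfolding nle_def by (auto simp: add_zero_left)

text \<open>Totality makes a binary sum equal to one of its summands.\<close>

lemma nle_add_iff: "nle add k (add a b) \<longleftrightarrow> nle add k a \<or> nle add k b"
proof (cases "nle add a b")
  case True
  then have "add a b = b"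
    unfolding nle_def using add_comm by metis
  then show ?thesis
    using True nle_trans by auto
next
  case False
  then have "nle add b a"
    using total by blast
  then have "add a b = a"
    unfolding nle_def by metis
  then show ?thesis
    using \<open>nle add b a\<close> nle_trans by auto
qed

lemma Sum_zero: "SumK I (\<lambda>_. zero) = zero"
  using Sum_mult_one[of I zero] by (simp add: mult_zero_left)

lemma Sum_indicator:
  "SumK I (\<lambda>i. if P i then one else zero) = (if \<exists>i\<in>I. P i then one else zero)"
proof (cases "\<exists>i\<in>I. P i")
  case True
  then obtain i where i: "i \<in> I" "P i"
    by blast
  define part :: "idx \<Rightarrow> idx set" where "part = (\<lambda>j. if j = (\<lambda>_. 0) then {i} else I - {i})"
  have "SumK I (\<lambda>i. if P i then one else zero)
      = SumK {\<lambda>_. 0, \<lambda>_. 1} (\<lambda>j. SumK (part j) (\<lambda>i. if P i then one else zero))"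
    by (rule Sum_partition) (use i const_zero_neq_const_one in \<open>auto simp: part_def\<close>)
  also have "\<dots> = one"
    using Sum_pair[OF const_zero_neq_const_one] const_zero_neq_const_one i by (simp add: part_def Sum_single add_one_left)
  finally show ?thesis
    using True by simp
next
  case False
  then have "SumK I (\<lambda>i. if P i then one else zero) = SumK I (\<lambda>_. zero)"
    by (intro Sum_cong) simp
  then show ?thesis
    using False by (simp add: Sum_zero)
qed

lemma nsum_indicator:
  "nsum SumK A (\<lambda>i. if P i then one else zero) = (if \<exists>i\<in>A. P i then one else zero)"
  unfolding nsum_def Sum_indicator by simp

lemma Val_indicator:
  "Val (\<lambda>i. if P i then one else zero) = (if \<forall>i. P i then one else zero)"
proof (cases "\<forall>i. P i")
  case False
  then obtain i where "\<not> P i"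
    by blast
  moreover have "fin_valued (\<lambda>i. if P i then one else zero)"
    unfolding fin_valued_def by (rule finite_subset[of _ "{zero, one}"]) auto
  ultimately have "Val (\<lambda>i. if P i then one else zero) = zero"
    by (intro Val_zero[of _ i]) simp_all
  with False show ?thesis
    by (simp only: if_False)
qed (simp add: Val_one)

lemma add_indicator:
  "add (if P then one else zero) (if Q then one else zero) = (if P \<or> Q then one else zero)"
  by (simp add: add_idem add_one_left add_one_right add_zero_left)

lemma mult_indicator:
  "mult (if P then one else zero) (if Q then one else zero) = (if P \<and> Q then one else zero)"
  by (simp add: mult_one_left mult_zero_left)

lemma wsem_sbLTL:
  "sbLTL one \<phi> \<Longrightarrow> wsem \<phi> w = (if w \<in> lang one \<phi> then one else zero)"
proof (induction arbitrary: w rule: sbLTL.induct)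
  case (sb_or \<phi> \<psi>)
  then show ?case
    by (simp add: add_indicator)
next
  case (sb_and \<phi> \<psi>)
  then show ?case
    by (simp add: mult_indicator)
next
  case (sb_box \<phi>)
  then show ?case
    by (simp add: Val_indicator)
next
  case (sb_wuntil \<phi> \<psi>)
  have box: "wsem (Box \<phi>) w = (if w \<in> lang one (Box \<phi>) then one else zero)"
    using sb_wuntil.IH by (simp add: Val_indicator)
  have prefix_val:
    "Val (\<lambda>j. if j < i then wsem \<phi> (suffix j w) else if j = i then wsem \<psi> (suffix i w) else one)
       = (if suffix i w \<in> lang one \<psi> \<and> (\<forall>j<i. suffix j w \<in> lang one \<phi>) then one else zero)" for i
  proof -
    have "(\<lambda>j. if j < i then wsem \<phi> (suffix j w) else if j = i then wsem \<psi> (suffix i w) else one)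
        = (\<lambda>j. if (j < i \<longrightarrow> suffix j w \<in> lang one \<phi>) \<and> (j = i \<longrightarrow> suffix i w \<in> lang one \<psi>)
               then one else zero)"
      using sb_wuntil.IH by (auto simp: fun_eq_iff)
    moreover have "(\<forall>j. (j < i \<longrightarrow> suffix j w \<in> lang one \<phi>) \<and> (j = i \<longrightarrow> suffix i w \<in> lang one \<psi>))
        \<longleftrightarrow> suffix i w \<in> lang one \<psi> \<and> (\<forall>j<i. suffix j w \<in> lang one \<phi>)"
      by auto
    ultimately show ?thesis
      by (simp only: Val_indicator)
  qed
  have until: "wsem (Until \<phi> \<psi>) w = (if w \<in> lang one (Until \<phi> \<psi>) then one else zero)"
    by (simp only: sem.simps prefix_val nsum_indicator) simp
  show ?case
    unfolding WUntil_def sem.simps(4) box until add_indicator by simp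
qed simp_all

lemma nle_wsem_bigOr:
  "fs \<noteq> [] \<Longrightarrow> nle add k (wsem (bigOr fs) w) \<longleftrightarrow> (\<exists>\<phi>\<in>set fs. nle add k (wsem \<phi> w))"
  by (induction fs rule: bigOr.induct) (auto simp: nle_add_iff)

lemma nle_wsem_weighted_sbLTL:
  assumes "nle add k c" "k \<noteq> zero" "sbLTL one \<phi>"
  shows "nle add k (wsem (And (Const c) \<phi>) w) \<longleftrightarrow> w \<in> lang one \<phi>"
  using assms wsem_sbLTL[OF assms(3)] by (simp add: mult_one_right mult_zero_right nle_zero_iff)

lemma safety_k_stLTL:
  assumes "k \<noteq> zero" "k_stLTL add zero one k \<phi>"
  shows "safety {w. nle add k (wsem \<phi> w)}"
proof -
  from assms(2) obtain ps :: "('k \<times> ('k, 'a) wltl) list" where ps: "ps \<noteq> []"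
      "\<forall>(c, \<psi>) \<in> set ps. c \<in> Lk add k - {zero, one} \<and> sbLTL one \<psi>"
      "\<phi> = bigOr (map (\<lambda>(c, \<psi>). And (Const c) \<psi>) ps)"
    unfolding k_stLTL_def by (elim exE conjE)
  have part: "nle add k c \<and> sbLTL one \<psi>" if "(c, \<psi>) \<in> set ps" for c \<psi>
    using ps(2) that by (auto simp: Lk_def)
  have "nle add k (wsem \<phi> w) \<longleftrightarrow> (\<exists>x \<in> set ps. w \<in> lang one (snd x))" for w
  proof -
    have "nle add k (wsem \<phi> w)
        \<longleftrightarrow> (\<exists>x \<in> set ps. nle add k (wsem (case x of (c, \<psi>) \<Rightarrow> And (Const c) \<psi>) w))"
      unfolding ps(3) using ps(1) by (simp add: nle_wsem_bigOr)
    also have "\<dots> \<longleftrightarrow> (\<exists>x \<in> set ps. w \<in> lang one (snd x))"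
    proof (intro bex_cong refl)
      fix x
      assume x: "x \<in> set ps"
      obtain c \<psi> where x_eq: "x = (c, \<psi>)"
        by fastforce
      have "nle add k (wsem (And (Const c) \<psi>) w) \<longleftrightarrow> w \<in> lang one \<psi>"
        using part[OF x[unfolded x_eq]] nle_wsem_weighted_sbLTL[OF _ assms(1)] by blast
      with x_eq show
        "nle add k (wsem (case x of (c, \<psi>) \<Rightarrow> And (Const c) \<psi>) w) \<longleftrightarrow> w \<in> lang one (snd x)"
        by simp
    qed
    finally show ?thesis .
  qed
  then have "{w. nle add k (wsem \<phi> w)} = (\<Union>x \<in> set ps. lang one (snd x))"
    by blast
  also have "safety \<dots>"
    using part by (intro safety_UN safety_lang) auto
  finally show ?thesis .
qed

end

theorem lemma8:
  fixes add :: "'k \<Rightarrow> 'k \<Rightarrow> 'k" and zero one :: 'k and mult :: "'k \<Rightarrow> 'k \<Rightarrow> 'k"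
    and Val :: "(nat \<Rightarrow> 'k) \<Rightarrow> 'k" and SumK :: "idx set \<Rightarrow> (idx \<Rightarrow> 'k) \<Rightarrow> 'k"
    and k :: 'k and \<phi> :: "('k, 'a::finite) wltl"
  assumes "idem_ord_TGP_omega_vm add zero one mult Val SumK"
    and "k \<noteq> zero" and "k \<noteq> one"
    and "k_stLTL add zero one k \<phi>"
  shows "k_safe add k (sem add zero one mult Val SumK \<phi>)"
proof -
  interpret idem_ord_TGP_omega_vm add zero one mult Val SumK
    by fact
  show ?thesis
    unfolding k_safe_iff_safety using safety_k_stLTL assms(2,4) by blast
qed

end
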